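(* Let $q$ be a prime power, $m\ge1$, $1\le k<n$. Let $E\in \mathcal T(k,n)$ and let $\mathcal{U}_0 := \{(u_1,\dots,u_n) \in \mathbb{F}_q^n \mid u_{k+1}=\dots=u_n=0 \}$. Then $\deg f_E=k-\dim\left(\mathrm{rs}(E)\cap \mathcal{U}_0 \right)$.
   Context: $\mathcal T(k,n)=\{E\in \mathbb{F}_q^{k\times n} \mid E \text{ is in reduced row echelon form and } \mathrm{rk}(E)=k\}$; $\mathrm{rs}(E)$ is the $\mathbb{F}_q$-row space of $E$. Let $X$ be the $k\times(n-k)$ matrix whose entries are the distinct indeterminates $x_1,\dots,x_{k(n-k)}$. For $E\in\mathcal T(k,n)$, $f_E:=\det([\,I_k\mid X\,]E^T)\in\mathbb{F}_{q^m}[x_1,\dots,x_{k(n-k)}]$, and $\deg$ denotes total degree. *)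

theory Defs
  imports "Jordan_Normal_Form.Determinant" "Jordan_Normal_Form.Gauss_Jordan_Elimination"
          "Jordan_Normal_Form.DL_Rank" "Jordan_Normal_Form.VS_Connect"
          "HOL-Library.Poly_Mapping" "HOL-Computational_Algebra.Primes"
begin

type_synonym 'b mpoly = "(nat \<Rightarrow>\<^sub>0 nat) \<Rightarrow>\<^sub>0 'b"

definition mp_var :: "nat \<Rightarrow> 'b::comm_ring_1 mpoly" where
  "mp_var i = Poly_Mapping.single (Poly_Mapping.single i 1) 1"

definition mp_const :: "'b::comm_ring_1 \<Rightarrow> 'b mpoly" where
  "mp_const c = Poly_Mapping.single 0 c"

text \<open>Total degree (the zero polynomial gets degree 0 by convention).\<close>
definition total_degree :: "'b::zero mpoly \<Rightarrow> nat" where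
  "total_degree p = Max (insert 0 ((\<lambda>mon. \<Sum>i\<in>Poly_Mapping.keys mon. Poly_Mapping.lookup mon i) ` Poly_Mapping.keys p))"

text \<open>The matrix [I_k | X], where X is k x (n-k) with entry (i,j) the variable number i*(n-k)+j
  (0-based indices; these are k(n-k) distinct indeterminates).\<close>
definition IX_mat :: "nat \<Rightarrow> nat \<Rightarrow> 'b::comm_ring_1 mpoly mat" where
  "IX_mat k n = mat k n (\<lambda>(i,j). if j < k then (if i = j then 1 else 0)
                                   else mp_var (i * (n - k) + (j - k)))"

text \<open>f_E = det([I_k | X] E^T), with E over F_q embedded into F_{q^m} via phi.\<close>
definition f_E :: "('a \<Rightarrow> 'b) \<Rightarrow> nat \<Rightarrow> nat \<Rightarrow> 'a mat \<Rightarrow> 'b::comm_ring_1 mpoly" where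
  "f_E phi k n E = det (IX_mat k n * transpose_mat (map_mat (\<lambda>a. mp_const (phi a)) E))"

text \<open>T(k,n): k x n matrices in reduced row echelon form of rank k.
  (row_echelon_form of JNF requires leading ones and zeros above/below pivots, i.e. reduced form.)\<close>
definition T_set :: "nat \<Rightarrow> nat \<Rightarrow> 'a::field mat set" where
  "T_set k n = {E. E \<in> carrier_mat k n \<and> row_echelon_form E \<and> vec_space.rank k E = k}"

definition U0 :: "nat \<Rightarrow> nat \<Rightarrow> 'a::field vec set" where
  "U0 k n = {u \<in> carrier_vec n. \<forall>i. k \<le> i \<and> i < n \<longrightarrow> u $ i = 0}"

definition subspace_dim :: "nat \<Rightarrow> 'a::field vec set \<Rightarrow> nat" where
  "subspace_dim n W = vectorspace.dim class_ring ((module_vec TYPE('a) n)\<lparr>carrier := W\<rparr>)"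

end

theory Submission
  imports Defs
begin

text \<open>
  Replacing E by E' = P E with P invertible multiplies f_E by the nonzero constant det P and
  does not change the row space. Choose P such that E', with its last n - k columns moved to
  the front, is in reduced row echelon form, and let r be the number of pivots lying in these
  columns. The remaining k - r rows of E' vanish on the last n - k coordinates and form a
  basis of rs(E) \<inter> U0. In det([I_k | X] E'^T) the variables occur only in the r columns
  belonging to the first r rows, and there only linearly, so the degree is at most r.
  Conversely, substituting suitable univariate polynomials in t for the variables turns
  [I_k | X] E'^T into C diag(t, ..., t, 1, ..., 1) with C invertible, whose determinant has
  degree exactly r.
\<close>

section \<open>Total degree\<close>

definition monomial_degree :: "(nat \<Rightarrow>\<^sub>0 nat) \<Rightarrow> nat" where
  "monomial_degree \<mu> = (\<Sum>i\<in>Poly_Mapping.keys \<mu>. Poly_Mapping.lookup \<mu> i)"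

lemma monomial_degree_eq_sum:
  "finite S \<Longrightarrow> Poly_Mapping.keys \<mu> \<subseteq> S \<Longrightarrow>
    monomial_degree \<mu> = (\<Sum>i\<in>S. Poly_Mapping.lookup \<mu> i)"
  unfolding monomial_degree_def by (rule sum.mono_neutral_left) (auto simp: in_keys_iff)

lemma monomial_degree_add: "monomial_degree (a + b) = monomial_degree a + monomial_degree b"
proof -
  let ?S = "Poly_Mapping.keys a \<union> Poly_Mapping.keys b"
  have "monomial_degree (a + b) = (\<Sum>i\<in>?S. Poly_Mapping.lookup (a + b) i)"
    by (rule monomial_degree_eq_sum) (auto simp: keys_add)
  also have "\<dots> = (\<Sum>i\<in>?S. Poly_Mapping.lookup a i) + (\<Sum>i\<in>?S. Poly_Mapping.lookup b i)"
    by (simp add: lookup_add sum.distrib)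
  also have "\<dots> = monomial_degree a + monomial_degree b"
    by (subst (1 2) monomial_degree_eq_sum[of ?S]) auto
  finally show ?thesis .
qed

lemma total_degree_le_iff:
  "total_degree p \<le> d \<longleftrightarrow> (\<forall>\<mu>\<in>Poly_Mapping.keys p. monomial_degree \<mu> \<le> d)"
  unfolding total_degree_def monomial_degree_def[symmetric] by auto

lemma monomial_degree_le_total_degree:
  "\<mu> \<in> Poly_Mapping.keys p \<Longrightarrow> monomial_degree \<mu> \<le> total_degree p"
  using total_degree_le_iff[of p "total_degree p"] by simp

lemma total_degree_eq_0I: "Poly_Mapping.keys p \<subseteq> {0} \<Longrightarrow> total_degree p = 0"
  using total_degree_le_iff[of p 0] by (auto simp: monomial_degree_def)

lemma total_degree_of_int [simp]: "total_degree (of_int c :: 'b::comm_ring_1 mpoly) = 0"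
  by (rule total_degree_eq_0I) (auto simp: in_keys_iff lookup_of_int)

lemma total_degree_0 [simp]: "total_degree (0 :: 'b::comm_ring_1 mpoly) = 0"
  using total_degree_of_int[of 0] by simp

lemma total_degree_1 [simp]: "total_degree (1 :: 'b::comm_ring_1 mpoly) = 0"
  using total_degree_of_int[of 1] by simp

lemma total_degree_mp_const [simp]: "total_degree (mp_const c :: 'b::comm_ring_1 mpoly) = 0"
  by (rule total_degree_eq_0I) (auto simp: mp_const_def)

lemma total_degree_mp_var_le: "total_degree (mp_var i :: 'b::comm_ring_1 mpoly) \<le> 1"
  unfolding total_degree_le_iff mp_var_def by (auto simp: monomial_degree_def)

lemma total_degree_add_le:
  fixes p q :: "'b::comm_ring_1 mpoly"
  shows "total_degree (p + q) \<le> max (total_degree p) (total_degree q)"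
  unfolding total_degree_le_iff
  using keys_add[of p q] monomial_degree_le_total_degree[of _ p] monomial_degree_le_total_degree[of _ q]
  by (fastforce simp: le_max_iff_disj)

lemma total_degree_mult_le:
  fixes p q :: "'b::comm_ring_1 mpoly"
  shows "total_degree (p * q) \<le> total_degree p + total_degree q"
  unfolding total_degree_le_iff
proof
  fix \<mu> assume "\<mu> \<in> Poly_Mapping.keys (p * q)"
  then obtain a b where "\<mu> = a + b" "a \<in> Poly_Mapping.keys p" "b \<in> Poly_Mapping.keys q"
    using keys_mult[of p q] by blast
  then show "monomial_degree \<mu> \<le> total_degree p + total_degree q"
    using monomial_degree_le_total_degree[of a p] monomial_degree_le_total_degree[of b q]
    by (simp add: monomial_degree_add)
qed

lemma total_degree_sum_le:
  fixes g :: "'x \<Rightarrow> 'b::comm_ring_1 mpoly"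
  shows "(\<And>x. x \<in> A \<Longrightarrow> total_degree (g x) \<le> d) \<Longrightarrow> total_degree (sum g A) \<le> d"
proof (induction A rule: infinite_finite_induct)
  case (insert x F)
  then show ?case
    using total_degree_add_le[of "g x" "sum g F"] by (auto intro: order_trans)
qed simp_all

lemma total_degree_prod_le:
  fixes g :: "'x \<Rightarrow> 'b::comm_ring_1 mpoly"
  shows "total_degree (prod g A) \<le> (\<Sum>x\<in>A. total_degree (g x))"
proof (induction A rule: infinite_finite_induct)
  case (insert x F)
  then show ?case using total_degree_mult_le[of "g x" "prod g F"] by auto
qed simp_all

lemma comm_ring_hom_mp_const: "comm_ring_hom (mp_const :: 'b::comm_ring_1 \<Rightarrow> 'b mpoly)"
  by unfold_locales (simp_all add: mp_const_def single_add mult_single)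

lemma total_degree_mult_mp_const:
  fixes p :: "'b::field mpoly"
  assumes "c \<noteq> 0"
  shows "total_degree (p * mp_const c) = total_degree p"
proof (rule antisym)
  interpret comm_ring_hom "mp_const :: 'b \<Rightarrow> 'b mpoly" by (rule comm_ring_hom_mp_const)
  show "total_degree (p * mp_const c) \<le> total_degree p"
    using total_degree_mult_le[of p "mp_const c"] by simp
  have "mp_const c * mp_const (inverse c) = (1 :: 'b mpoly)"
    using assms by (simp flip: hom_mult)
  then have "total_degree p = total_degree (p * mp_const c * mp_const (inverse c))"
    by (simp add: mult.assoc)
  also have "\<dots> \<le> total_degree (p * mp_const c)"
    using total_degree_mult_le[of "p * mp_const c" "mp_const (inverse c)"] by simp
  finally show "total_degree p \<le> total_degree (p * mp_const c)" .
qed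


section \<open>Substituting univariate polynomials for the variables\<close>

lemma poly_mapping_sum_single_lookup:
  "p = (\<Sum>a\<in>Poly_Mapping.keys p. Poly_Mapping.single a (Poly_Mapping.lookup p a))"
proof -
  have lookup_sum: "finite I \<Longrightarrow>
      Poly_Mapping.lookup (\<Sum>i\<in>I. Poly_Mapping.single i (Poly_Mapping.lookup p i)) j =
      (if j \<in> I then Poly_Mapping.lookup p j else 0)" for I j
    by (induction I rule: finite_induct) (auto simp: lookup_single lookup_add when_def)
  show ?thesis
    by (rule poly_mapping_eqI) (fastforce simp add: in_keys_iff lookup_sum)
qed

definition monom_subst :: "(nat \<Rightarrow> 'b::comm_ring_1 poly) \<Rightarrow> (nat \<Rightarrow>\<^sub>0 nat) \<Rightarrow> 'b poly" where
  "monom_subst s \<mu> = (\<Prod>i\<in>Poly_Mapping.keys \<mu>. s i ^ Poly_Mapping.lookup \<mu> i)"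

definition mpoly_subst :: "(nat \<Rightarrow> 'b::comm_ring_1 poly) \<Rightarrow> 'b mpoly \<Rightarrow> 'b poly" where
  "mpoly_subst s p =
    (\<Sum>\<mu>\<in>Poly_Mapping.keys p. Polynomial.smult (Poly_Mapping.lookup p \<mu>) (monom_subst s \<mu>))"

lemma monom_subst_eq_prod:
  "finite S \<Longrightarrow> Poly_Mapping.keys \<mu> \<subseteq> S \<Longrightarrow>
    monom_subst s \<mu> = (\<Prod>i\<in>S. s i ^ Poly_Mapping.lookup \<mu> i)"
  unfolding monom_subst_def by (rule prod.mono_neutral_left) (auto simp: in_keys_iff)

lemma monom_subst_0 [simp]: "monom_subst s 0 = 1"
  by (simp add: monom_subst_def)

lemma monom_subst_add: "monom_subst s (a + b) = monom_subst s a * monom_subst s b"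
proof -
  let ?S = "Poly_Mapping.keys a \<union> Poly_Mapping.keys b"
  have "monom_subst s (a + b) = (\<Prod>i\<in>?S. s i ^ Poly_Mapping.lookup (a + b) i)"
    by (rule monom_subst_eq_prod) (auto simp: keys_add)
  also have "\<dots> = (\<Prod>i\<in>?S. s i ^ Poly_Mapping.lookup a i) * (\<Prod>i\<in>?S. s i ^ Poly_Mapping.lookup b i)"
    by (simp add: lookup_add power_add prod.distrib)
  also have "\<dots> = monom_subst s a * monom_subst s b"
    by (subst (1 2) monom_subst_eq_prod[of ?S]) auto
  finally show ?thesis .
qed

lemma mpoly_subst_eq_sum:
  "finite S \<Longrightarrow> Poly_Mapping.keys p \<subseteq> S \<Longrightarrow>
    mpoly_subst s p = (\<Sum>\<mu>\<in>S. Polynomial.smult (Poly_Mapping.lookup p \<mu>) (monom_subst s \<mu>))"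
  unfolding mpoly_subst_def by (rule sum.mono_neutral_left) (auto simp: in_keys_iff)

lemma mpoly_subst_0: "mpoly_subst s 0 = 0"
  by (simp add: mpoly_subst_def)

lemma mpoly_subst_add: "mpoly_subst s (p + q) = mpoly_subst s p + mpoly_subst s q"
proof -
  let ?S = "Poly_Mapping.keys p \<union> Poly_Mapping.keys q"
  let ?t = "\<lambda>r \<mu>. Polynomial.smult (Poly_Mapping.lookup r \<mu>) (monom_subst s \<mu>)"
  have "mpoly_subst s (p + q) = (\<Sum>\<mu>\<in>?S. ?t (p + q) \<mu>)"
    by (rule mpoly_subst_eq_sum) (auto simp: keys_add)
  also have "\<dots> = (\<Sum>\<mu>\<in>?S. ?t p \<mu>) + (\<Sum>\<mu>\<in>?S. ?t q \<mu>)"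
    by (simp add: lookup_add smult_add_left sum.distrib)
  also have "\<dots> = mpoly_subst s p + mpoly_subst s q"
    by (subst (1 2) mpoly_subst_eq_sum[of ?S]) auto
  finally show ?thesis .
qed

lemma mpoly_subst_sum: "mpoly_subst s (sum g A) = (\<Sum>x\<in>A. mpoly_subst s (g x))"
  by (induction A rule: infinite_finite_induct) (auto simp: mpoly_subst_0 mpoly_subst_add)

lemma mpoly_subst_single:
  "mpoly_subst s (Poly_Mapping.single \<mu> c) = Polynomial.smult c (monom_subst s \<mu>)"
  by (cases "c = 0") (auto simp: mpoly_subst_def mpoly_subst_0)

lemma mpoly_subst_mult: "mpoly_subst s (p * q) = mpoly_subst s p * mpoly_subst s q"
proof -
  let ?P = "Poly_Mapping.keys p" and ?Q = "Poly_Mapping.keys q"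
  let ?sp = "\<lambda>a. Poly_Mapping.single a (Poly_Mapping.lookup p a)"
  let ?sq = "\<lambda>b. Poly_Mapping.single b (Poly_Mapping.lookup q b)"
  let ?tp = "\<lambda>a. Polynomial.smult (Poly_Mapping.lookup p a) (monom_subst s a)"
  let ?tq = "\<lambda>b. Polynomial.smult (Poly_Mapping.lookup q b) (monom_subst s b)"
  have "p * q = (\<Sum>a\<in>?P. \<Sum>b\<in>?Q. ?sp a * ?sq b)"
    by (subst (1 2) poly_mapping_sum_single_lookup) (rule sum_product)
  moreover have "mpoly_subst s (?sp a * ?sq b) = ?tp a * ?tq b" for a b
    unfolding mult_single mpoly_subst_single monom_subst_add by (simp add: ac_simps)
  ultimately have "mpoly_subst s (p * q) = (\<Sum>a\<in>?P. \<Sum>b\<in>?Q. ?tp a * ?tq b)"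
    by (simp add: mpoly_subst_sum)
  also have "\<dots> = mpoly_subst s p * mpoly_subst s q"
    unfolding mpoly_subst_def by (rule sum_product[symmetric])
  finally show ?thesis .
qed

lemma comm_ring_hom_mpoly_subst:
  fixes s :: "nat \<Rightarrow> 'b::comm_ring_1 poly"
  shows "comm_ring_hom (mpoly_subst s)"
proof
  have "(1 :: 'b mpoly) = Poly_Mapping.single 0 1" by simp
  then show "mpoly_subst s 1 = 1"
    by (metis mpoly_subst_single monom_subst_0 smult_1_left)
qed (simp_all add: mpoly_subst_0 mpoly_subst_add mpoly_subst_mult)

lemma mpoly_subst_mp_const [simp]: "mpoly_subst s (mp_const c) = [:c:]"
  by (simp add: mp_const_def mpoly_subst_single)

lemma mpoly_subst_mp_var [simp]: "mpoly_subst s (mp_var i) = s i"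
  by (simp add: mp_var_def mpoly_subst_single monom_subst_def)

lemma degree_monom_subst_le:
  assumes "\<And>i. degree (s i) \<le> 1"
  shows "degree (monom_subst s \<mu>) \<le> monomial_degree \<mu>"
proof -
  have "degree (monom_subst s \<mu>) \<le>
      (\<Sum>i\<in>Poly_Mapping.keys \<mu>. degree (s i ^ Poly_Mapping.lookup \<mu> i))"
    unfolding monom_subst_def
    using degree_prod_sum_le[of "Poly_Mapping.keys \<mu>" "\<lambda>i. s i ^ Poly_Mapping.lookup \<mu> i"]
    by (simp add: o_def)
  also have "\<dots> \<le> (\<Sum>i\<in>Poly_Mapping.keys \<mu>. Poly_Mapping.lookup \<mu> i)"
  proof (rule sum_mono)
    fix i
    have "degree (s i ^ Poly_Mapping.lookup \<mu> i) \<le> degree (s i) * Poly_Mapping.lookup \<mu> i"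
      by (rule degree_power_le)
    then show "degree (s i ^ Poly_Mapping.lookup \<mu> i) \<le> Poly_Mapping.lookup \<mu> i"
      using assms[of i] by (simp add: order_trans)
  qed
  finally show ?thesis by (simp add: monomial_degree_def)
qed

lemma degree_mpoly_subst_le:
  assumes "\<And>i. degree (s i) \<le> 1"
  shows "degree (mpoly_subst s p) \<le> total_degree p"
  unfolding mpoly_subst_def
proof (rule degree_sum_le)
  fix \<mu> assume \<mu>: "\<mu> \<in> Poly_Mapping.keys p"
  have "degree (Polynomial.smult (Poly_Mapping.lookup p \<mu>) (monom_subst s \<mu>)) \<le> degree (monom_subst s \<mu>)"
    by (rule degree_smult_le)
  also have "\<dots> \<le> monomial_degree \<mu>" by (rule degree_monom_subst_le[OF assms])
  also have "\<dots> \<le> total_degree p" using \<mu> by (rule monomial_degree_le_total_degree)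
  finally show "degree (Polynomial.smult (Poly_Mapping.lookup p \<mu>) (monom_subst s \<mu>)) \<le> total_degree p" .
qed simp


lemma downclosed_eq_lessThan:
  fixes T :: "nat set"
  assumes "finite T" and "\<And>i j. j \<in> T \<Longrightarrow> i < j \<Longrightarrow> i \<in> T"
  shows "T = {..<card T}"
proof (cases "T = {}")
  case False
  then have "Max T \<in> T" using assms(1) by simp
  then have "T = {..Max T}" using assms by (auto simp: le_less intro: Max_ge)
  then show ?thesis by (metis card_lessThan lessThan_Suc_atMost)
qed simp

lemma sum_vanishing_prefix:
  fixes g :: "nat \<Rightarrow> 'b::comm_monoid_add"
  assumes "r \<le> k" and "\<And>u. u < r \<Longrightarrow> g u = 0"
  shows "(\<Sum>u = 0..<k. g u) = (\<Sum>i = 0..<k - r. g (i + r))"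
proof -
  have "(\<Sum>u = 0..<k. g u) = (\<Sum>u = 0..<r. g u) + (\<Sum>u = r..<k. g u)"
    using assms(1) by (simp add: sum.atLeastLessThan_concat)
  also have "(\<Sum>u = 0..<r. g u) = 0" using assms(2) by simp
  also have "(\<Sum>u = r..<k. g u) = (\<Sum>i = 0..<k - r. g (i + r))"
    using sum.shift_bounds_nat_ivl[of g 0 r "k - r"] assms(1) by simp
  finally show ?thesis by simp
qed

lemma index_transpose_mult_vec:
  assumes "A \<in> carrier_mat m n" "y \<in> carrier_vec m" "j < n"
  shows "(A\<^sup>T *\<^sub>v y) $ j = (\<Sum>u = 0..<m. A $$ (u, j) * y $ u)"
  using assms by (auto simp: scalar_prod_def intro!: sum.cong)

lemma det_eq_0_if_zero_row:
  fixes A :: "'b::comm_ring_1 mat"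
  assumes A: "A \<in> carrier_mat n n" and i: "i < n" and zero: "\<And>j. j < n \<Longrightarrow> A $$ (i, j) = 0"
  shows "det A = 0"
  unfolding det_def'[OF A]
proof (rule sum.neutral, intro ballI)
  fix p assume "p \<in> {p. p permutes {0..<n}}"
  then have "p i < n" using permutes_in_image i by fastforce
  then have "(\<Prod>i = 0..<n. A $$ (i, p i)) = 0"
    using zero i by (intro prod_zero bexI[of _ i]) auto
  then show "signof p * (\<Prod>i = 0..<n. A $$ (i, p i)) = 0" by simp
qed

lemma (in vec_space) full_rank_square_submatrix:
  assumes A: "A \<in> carrier_mat n nc" and rank: "rank A = n"
  obtains B where "B \<in> carrier_mat n n" "det B \<noteq> 0" "set (cols B) \<subseteq> set (cols A)"
proof -
  obtain S where S: "maximal S (\<lambda>T. T \<subseteq> set (cols A) \<and> lin_indpt T)"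
    using maximal_exists[of "\<lambda>T. T \<subseteq> set (cols A) \<and> lin_indpt T" "card (set (cols A))" "{}"]
    by (meson List.finite_set card_mono empty_iff empty_subsetI finite_lin_indpt2 rev_finite_subset)
  have card_S: "card S = n" using rank_card_indpt[OF A S] rank by simp
  have S_cols: "S \<subseteq> set (cols A)" and S_indpt: "lin_indpt S"
    using S unfolding maximal_def by auto
  obtain xs where xs: "set xs = S" "distinct xs"
    using finite_distinct_list finite_subset[OF S_cols] by blast
  have "length xs = n" using xs card_S distinct_card by fastforce
  moreover have "set xs \<subseteq> carrier_vec n" using xs S_cols A cols_dim by blast
  ultimately have B: "mat_of_cols n xs \<in> carrier_mat n n" and cols_B: "cols (mat_of_cols n xs) = xs"
    by (auto simp: cols_mat_of_cols)
  have "rank (mat_of_cols n xs) = n"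
    using lin_indpt_full_rank[OF B] cols_B xs S_indpt by simp
  then have "det (mat_of_cols n xs) \<noteq> 0" using det_rank_iff[OF B] by simp
  then show thesis using that B cols_B xs S_cols by simp
qed

lemma full_rank_mult_row_nonzero:
  fixes A :: "'a::field mat"
  assumes A: "A \<in> carrier_mat k n" and rank: "vec_space.rank k A = k"
    and P: "P \<in> carrier_mat k k" and det_P: "det P \<noteq> 0" and i: "i < k"
  shows "\<exists>j<n. (P * A) $$ (i, j) \<noteq> 0"
proof (rule ccontr)
  assume "\<not> ?thesis"
  then have zero: "(P * A) $$ (i, j) = 0" if "j < n" for j using that by auto
  obtain B where B: "B \<in> carrier_mat k k" "det B \<noteq> 0" "set (cols B) \<subseteq> set (cols A)"
    using vec_space.full_rank_square_submatrix[OF A rank] by blast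
  have "(P * B) $$ (i, c) = 0" if c: "c < k" for c
  proof -
    have "col B c \<in> set (cols A)" using B c by (auto simp: cols_def)
    then obtain j where j: "j < n" "col B c = col A j"
      using A by (auto simp: cols_def)
    then show ?thesis using zero[OF j(1)] P A B(1) i c by simp
  qed
  then have "det (P * B) = 0"
    using P B(1) i by (intro det_eq_0_if_zero_row) auto
  then show False using det_mult[OF P B(1)] det_P B(2) by simp
qed


lemma IX_mat_mult_transpose_entry:
  fixes A :: "'b::comm_ring_1 mpoly mat"
  assumes A: "A \<in> carrier_mat m n" and i: "i < k" and l: "l < m" and kn: "k \<le> n"
  shows "(IX_mat k n * A\<^sup>T) $$ (i, l) =
    A $$ (l, i) + (\<Sum>j = 0..<n - k. mp_var (i * (n - k) + j) * A $$ (l, k + j))"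
proof -
  let ?t = "\<lambda>j. IX_mat k n $$ (i, j) * A $$ (l, j)"
  have "(IX_mat k n * A\<^sup>T) $$ (i, l) = (\<Sum>j = 0..<n. ?t j)"
    using A i l by (simp add: IX_mat_def scalar_prod_def)
  also have "\<dots> = (\<Sum>j = 0..<k. ?t j) + (\<Sum>j = k..<n. ?t j)"
    using kn by (simp add: sum.atLeastLessThan_concat)
  also have "(\<Sum>j = 0..<k. ?t j) = (\<Sum>j = 0..<k. if j = i then A $$ (l, j) else 0)"
    using i kn by (intro sum.cong) (auto simp: IX_mat_def)
  also have "\<dots> = A $$ (l, i)" using i by simp
  also have "(\<Sum>j = k..<n. ?t j) = (\<Sum>j = 0..<n - k. ?t (k + j))"
    using sum.shift_bounds_nat_ivl[of ?t 0 k "n - k"] kn by (simp add: add.commute)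
  also have "\<dots> = (\<Sum>j = 0..<n - k. mp_var (i * (n - k) + j) * A $$ (l, k + j))"
    using i by (intro sum.cong) (simp_all add: IX_mat_def)
  finally show ?thesis .
qed

definition rotate_cols :: "nat \<Rightarrow> 'a mat \<Rightarrow> 'a mat" where
  "rotate_cols k A = mat (dim_row A) (dim_col A)
     (\<lambda>(i, j). if j < dim_col A - k then A $$ (i, k + j) else A $$ (i, j - (dim_col A - k)))"

lemma dim_rotate_cols [simp]:
  "dim_row (rotate_cols k A) = dim_row A" "dim_col (rotate_cols k A) = dim_col A"
  by (simp_all add: rotate_cols_def)

lemma rotate_cols_carrier: "A \<in> carrier_mat m n \<Longrightarrow> rotate_cols k A \<in> carrier_mat m n"
  by (simp add: rotate_cols_def)

section \<open>Echelon form of the rotated generator matrix\<close>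

text \<open>
  Rotating E moves the n - k columns that meet the variables X to the front, so that the
  pivots of R lying in these columns belong to the first rows.
\<close>

locale rotated_echelon_form =
  fixes E :: "'a::field mat" and k n :: nat and P Q R :: "'a mat" and f :: "nat \<Rightarrow> nat"
  assumes E: "E \<in> carrier_mat k n" and k_less_n: "k < n"
    and P: "P \<in> carrier_mat k k" and Q: "Q \<in> carrier_mat k k"
    and P_Q: "P * Q = 1\<^sub>m k" and Q_P: "Q * P = 1\<^sub>m k"
    and R: "R = P * rotate_cols k E"
    and pivot_fun_R: "pivot_fun R f n"
    and rank_E: "vec_space.rank k E = k"
begin

abbreviation s :: nat where "s \<equiv> n - k"

definition E' :: "'a mat" where "E' = P * E"

definition r :: nat where "r = card {i. i < k \<and> f i < s}"

lemma R_carrier: "R \<in> carrier_mat k n"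
  using R P E by auto

lemma E'_carrier: "E' \<in> carrier_mat k n"
  using P E by (simp add: E'_def)

lemmas pivot = pivot_funD[OF carrier_matD(1)[OF R_carrier] pivot_fun_R]

lemma E'_eq_R:
  assumes "i < k" "j < n"
  shows "E' $$ (i, j) = R $$ (i, if j < k then j + s else j - k)"
proof -
  let ?c = "if j < k then j + s else j - k"
  have c: "?c < n" using assms k_less_n by auto
  have "R $$ (i, ?c) = row P i \<bullet> col (rotate_cols k E) ?c"
    using assms c P E by (simp add: R)
  also have "col (rotate_cols k E) ?c = col E j"
    using assms E k_less_n by (intro eq_vecI) (auto simp: rotate_cols_def)
  also have "row P i \<bullet> col E j = E' $$ (i, j)"
    using assms P E by (simp add: E'_def)
  finally show ?thesis ..
qed

lemma det_P_nonzero: "det P \<noteq> 0"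
  using det_mult[OF P Q] P_Q by auto

lemma pivot_less_n: assumes i: "i < k" shows "f i < n"
proof (rule ccontr)
  assume "\<not> f i < n"
  then have "f i = n" using pivot(1)[OF i] by simp
  then have "E' $$ (i, j) = 0" if "j < n" for j
    using E'_eq_R[OF i that] pivot(2)[OF i] that k_less_n by auto
  then show False
    using full_rank_mult_row_nonzero[OF E rank_E P det_P_nonzero i] by (auto simp: E'_def)
qed

lemma pivot_strict_mono: "i < j \<Longrightarrow> j < k \<Longrightarrow> f i < f j"
proof (induction j)
  case (Suc j)
  have "f j < f (Suc j)" using pivot(3)[of j] pivot_less_n[of "Suc j"] Suc by auto
  then show ?case using Suc by (cases "i = j") auto
qed simp

lemma pivot_inj: "i < k \<Longrightarrow> j < k \<Longrightarrow> f i = f j \<Longrightarrow> i = j"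
  using pivot_strict_mono by (metis less_irrefl nat_neq_iff)

lemma pivot_less_s_iff: assumes "i < k" shows "f i < s \<longleftrightarrow> i < r"
proof -
  have "{i. i < k \<and> f i < s} = {..<r}"
    unfolding r_def by (rule downclosed_eq_lessThan) (auto dest: pivot_strict_mono)
  then show ?thesis using assms by blast
qed

lemma r_le_k: "r \<le> k"
  unfolding r_def by (rule order_trans[OF card_mono[of "{..<k}"]]) auto

lemma R_pivot_col: assumes "i < k" "l < k" shows "R $$ (i, f l) = (if i = l then 1 else 0)"
  using pivot(4)[of l] pivot(5)[of l i] pivot_less_n[of l] assms by auto

lemma E'_X_block: assumes "l < k" "j < s" shows "E' $$ (l, k + j) = R $$ (l, j)"
  using E'_eq_R[of l "k + j"] assms by auto

lemma E'_lower_rows_vanish_on_X_block: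
  assumes "r \<le> l" "l < k" "k \<le> j" "j < n"
  shows "E' $$ (l, j) = 0"
proof -
  have "\<not> f l < s" using pivot_less_s_iff[of l] assms by simp
  then show ?thesis using E'_eq_R[of l j] pivot(2)[of l "j - k"] assms by auto
qed

lemma E'_lower_pivot:
  assumes "r \<le> l" "l < k" "u < k"
  shows "f l - s < k" "E' $$ (u, f l - s) = (if u = l then 1 else 0)"
proof -
  have fl: "s \<le> f l" "f l < n" using pivot_less_s_iff[of l] pivot_less_n[of l] assms by auto
  then show "f l - s < k" by auto
  then show "E' $$ (u, f l - s) = (if u = l then 1 else 0)"
    using E'_eq_R[of u "f l - s"] fl R_pivot_col[of u l] assms k_less_n by auto
qed

end


section \<open>The subspace rs(E) \<inter> U0\<close>

sublocale rotated_echelon_form \<subseteq> vn: vec_space "TYPE('a)" n .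

context rotated_echelon_form
begin

definition lower_rows :: "'a mat" where
  "lower_rows = mat (k - r) n (\<lambda>(i, j). E' $$ (i + r, j))"

lemma lower_rows_carrier: "lower_rows \<in> carrier_mat (k - r) n"
  by (simp add: lower_rows_def)

lemma lower_rows_pivot:
  assumes "i < k - r" "u < k - r"
  shows "f (i + r) - s < n" "lower_rows $$ (u, f (i + r) - s) = (if u = i then 1 else 0)"
proof -
  have l: "r \<le> i + r" "i + r < k" "u + r < k" using assms by auto
  show "f (i + r) - s < n" using E'_lower_pivot(1)[OF l] k_less_n by simp
  then show "lower_rows $$ (u, f (i + r) - s) = (if u = i then 1 else 0)"
    using E'_lower_pivot(2)[OF l] assms by (simp add: lower_rows_def)
qed

lemma distinct_rows_lower_rows: "distinct (rows lower_rows)"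
proof -
  have "row lower_rows i \<noteq> row lower_rows i'" if "i < k - r" "i' < k - r" "i \<noteq> i'" for i i'
  proof
    assume "row lower_rows i = row lower_rows i'"
    then have "row lower_rows i $ (f (i + r) - s) = row lower_rows i' $ (f (i + r) - s)" by simp
    then show False using lower_rows_pivot[of i i] lower_rows_pivot[of i i'] that lower_rows_carrier by auto
  qed
  then show ?thesis using lower_rows_carrier unfolding distinct_conv_nth by auto
qed

lemma lin_indpt_rows_lower_rows: "vn.lin_indpt (set (rows lower_rows))"
proof
  assume "vn.lin_dep (set (rows lower_rows))"
  then obtain v where v: "v \<in> carrier_vec (k - r)" "v \<noteq> 0\<^sub>v (k - r)" "lower_rows\<^sup>T *\<^sub>v v = 0\<^sub>v n"
    using vn.lin_depE[of "lower_rows\<^sup>T"] lower_rows_carrier distinct_rows_lower_rows by auto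
  have "v $ i = 0" if i: "i < k - r" for i
  proof -
    have c: "f (i + r) - s < n" using lower_rows_pivot(1)[OF i i] .
    have "(lower_rows\<^sup>T *\<^sub>v v) $ (f (i + r) - s) =
        (\<Sum>u = 0..<k - r. lower_rows $$ (u, f (i + r) - s) * v $ u)"
      by (rule index_transpose_mult_vec[OF lower_rows_carrier v(1) c])
    also have "\<dots> = (\<Sum>u = 0..<k - r. if u = i then v $ u else 0)"
      by (rule sum.cong) (use lower_rows_pivot(2)[OF i] in auto)
    also have "\<dots> = v $ i" using i by simp
    finally show ?thesis using v(3) c by simp
  qed
  then have "v = 0\<^sub>v (k - r)" using v(1) by (intro eq_vecI) auto
  then show False using v(2) by simp
qed

lemma subspace_dim_row_space_lower_rows:
  "subspace_dim n (vn.row_space lower_rows) = k - r"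
proof -
  let ?S = "set (rows lower_rows)"
  have "?S \<subseteq> carrier_vec n" using lower_rows_carrier by (auto simp: rows_def)
  moreover have "maximal ?S (\<lambda>T. T \<subseteq> ?S \<and> vn.lin_indpt T)"
    using lin_indpt_rows_lower_rows unfolding maximal_def by auto
  ultimately have "vectorspace.dim class_ring (vn.span_vs ?S) = card ?S"
    using vn.dim_span by simp
  moreover have "card ?S = k - r"
    using distinct_card[OF distinct_rows_lower_rows] lower_rows_carrier by simp
  ultimately show ?thesis unfolding subspace_dim_def vn.row_space_def by simp
qed

lemma transpose_E'_mult_vec:
  assumes y: "y \<in> carrier_vec k" and y_prefix: "\<And>i. i < r \<Longrightarrow> y $ i = 0"
  shows "E'\<^sup>T *\<^sub>v y = lower_rows\<^sup>T *\<^sub>v vec (k - r) (\<lambda>i. y $ (i + r))"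
proof (rule eq_vecI)
  fix j assume "j < dim_vec (lower_rows\<^sup>T *\<^sub>v vec (k - r) (\<lambda>i. y $ (i + r)))"
  then have j: "j < n" using lower_rows_carrier by simp
  have "(E'\<^sup>T *\<^sub>v y) $ j = (\<Sum>u = 0..<k. E' $$ (u, j) * y $ u)"
    by (rule index_transpose_mult_vec[OF E'_carrier y j])
  also have "\<dots> = (\<Sum>i = 0..<k - r. E' $$ (i + r, j) * y $ (i + r))"
    using r_le_k y_prefix by (intro sum_vanishing_prefix) auto
  also have "\<dots> = (\<Sum>u = 0..<k - r. lower_rows $$ (u, j) * vec (k - r) (\<lambda>i. y $ (i + r)) $ u)"
    using j by (intro sum.cong) (simp_all add: lower_rows_def)
  also have "\<dots> = (lower_rows\<^sup>T *\<^sub>v vec (k - r) (\<lambda>i. y $ (i + r))) $ j"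
    by (rule index_transpose_mult_vec[symmetric, OF lower_rows_carrier _ j]) simp
  finally show "(E'\<^sup>T *\<^sub>v y) $ j = (lower_rows\<^sup>T *\<^sub>v vec (k - r) (\<lambda>i. y $ (i + r))) $ j" .
qed (use E'_carrier lower_rows_carrier in simp)

lemma coefficients_vanish_if_in_U0:
  assumes y: "y \<in> carrier_vec k" and U0: "E'\<^sup>T *\<^sub>v y \<in> U0 k n" and i: "i < r"
  shows "y $ i = 0"
proof -
  have ik: "i < k" using i r_le_k by simp
  have fi: "f i < s" using pivot_less_s_iff[OF ik] i by simp
  then have j: "k + f i < n" using k_less_n by simp
  have "(E'\<^sup>T *\<^sub>v y) $ (k + f i) = (\<Sum>u = 0..<k. E' $$ (u, k + f i) * y $ u)"
    by (rule index_transpose_mult_vec[OF E'_carrier y j])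
  also have "\<dots> = (\<Sum>u = 0..<k. if u = i then y $ u else 0)"
    by (rule sum.cong) (use E'_X_block[OF _ fi] R_pivot_col[OF _ ik] in auto)
  also have "\<dots> = y $ i" using ik by simp
  finally show ?thesis using U0 j unfolding U0_def by auto
qed

lemma transpose_lower_rows_mult_vec_in_U0:
  assumes y: "y \<in> carrier_vec (k - r)"
  shows "lower_rows\<^sup>T *\<^sub>v y \<in> U0 k n"
  unfolding U0_def
proof (intro CollectI conjI allI impI)
  fix j assume "k \<le> j \<and> j < n"
  then show "(lower_rows\<^sup>T *\<^sub>v y) $ j = 0"
    using index_transpose_mult_vec[OF lower_rows_carrier y, of j]
      E'_lower_rows_vanish_on_X_block by (simp add: lower_rows_def)
qed (use mult_mat_vec_carrier[of "lower_rows\<^sup>T" n "k - r"] lower_rows_carrier y in simp)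

lemma row_space_E_eq: "vn.row_space E = {w \<in> carrier_vec n. \<exists>y\<in>carrier_vec k. E'\<^sup>T *\<^sub>v y = w}"
proof -
  have "invertible_mat P"
    unfolding invertible_mat_def inverts_mat_def using P Q P_Q Q_P by auto
  then have "vn.row_space E = vn.row_space E'"
    unfolding E'_def by (rule vn.row_space_is_preserved[OF _ P E, symmetric])
  then show ?thesis using vn.row_space_eq[OF E'_carrier] E'_carrier by simp
qed

lemma row_space_Int_U0: "vn.row_space E \<inter> U0 k n = vn.row_space lower_rows"
proof -
  have row_space_L: "vn.row_space lower_rows =
      {w \<in> carrier_vec n. \<exists>y\<in>carrier_vec (k - r). lower_rows\<^sup>T *\<^sub>v y = w}"
    using vn.row_space_eq[OF lower_rows_carrier] lower_rows_carrier by simp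
  show ?thesis
  proof (intro equalityI subsetI)
    fix w assume "w \<in> vn.row_space E \<inter> U0 k n"
    then obtain y where y: "y \<in> carrier_vec k" "w = E'\<^sup>T *\<^sub>v y" and w: "w \<in> carrier_vec n" "w \<in> U0 k n"
      unfolding row_space_E_eq by auto
    then have "y $ i = 0" if "i < r" for i
      using coefficients_vanish_if_in_U0 that by simp
    then have "w = lower_rows\<^sup>T *\<^sub>v vec (k - r) (\<lambda>i. y $ (i + r))"
      using transpose_E'_mult_vec y by simp
    then show "w \<in> vn.row_space lower_rows" unfolding row_space_L using w by auto
  next
    fix w assume "w \<in> vn.row_space lower_rows"
    then obtain y' where y': "y' \<in> carrier_vec (k - r)" "w = lower_rows\<^sup>T *\<^sub>v y'" and w: "w \<in> carrier_vec n"
      unfolding row_space_L by auto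
    define y where "y = vec k (\<lambda>u. if u < r then 0 else y' $ (u - r))"
    have y: "y \<in> carrier_vec k" by (simp add: y_def)
    have y_prefix: "y $ i = 0" if "i < r" for i
      using that r_le_k by (simp add: y_def)
    have "vec (k - r) (\<lambda>i. y $ (i + r)) = y'"
      using y' by (intro eq_vecI) (auto simp: y_def)
    then have "w = E'\<^sup>T *\<^sub>v y"
      using transpose_E'_mult_vec[OF y y_prefix] y'(2) by simp
    then have "w \<in> vn.row_space E" unfolding row_space_E_eq using w y by auto
    moreover have "w \<in> U0 k n" using transpose_lower_rows_mult_vec_in_U0[OF y'(1)] y'(2) by simp
    ultimately show "w \<in> vn.row_space E \<inter> U0 k n" by simp
  qed
qed

lemma subspace_dim_row_space_Int_U0:
  "subspace_dim n (vn.row_space E \<inter> U0 k n) = k - r"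
  using row_space_Int_U0 subspace_dim_row_space_lower_rows by simp

end


section \<open>The degree of f_E\<close>

locale rotated_echelon_form_hom = rotated_echelon_form E k n P Q R f + phi: field_hom phi
  for E :: "'a::field mat" and k n P Q R f and phi :: "'a \<Rightarrow> 'b::field"
begin

abbreviation Phi :: "'a \<Rightarrow> 'b mpoly" where "Phi a \<equiv> mp_const (phi a)"

lemma comm_ring_hom_Phi: "comm_ring_hom Phi"
proof -
  interpret mp_const: comm_ring_hom "mp_const :: 'b \<Rightarrow> 'b mpoly" by (rule comm_ring_hom_mp_const)
  show ?thesis
    by unfold_locales (simp_all add: phi.hom_add phi.hom_mult mp_const.hom_add mp_const.hom_mult)
qed

definition N :: "'b mpoly mat" where "N = IX_mat k n * (map_mat Phi E')\<^sup>T"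

lemma N_carrier: "N \<in> carrier_mat k k"
  unfolding N_def by (rule mult_carrier_mat) (use E'_carrier in \<open>auto simp: IX_mat_def\<close>)

lemma f_E_mult_det_P: "f_E phi k n E * Phi (det P) = det N"
proof -
  interpret Phi: comm_ring_hom Phi by (rule comm_ring_hom_Phi)
  have IX: "IX_mat k n \<in> carrier_mat k n" by (simp add: IX_mat_def)
  have PhiE: "(map_mat Phi E)\<^sup>T \<in> carrier_mat n k" and PhiP: "(map_mat Phi P)\<^sup>T \<in> carrier_mat k k"
    using E P by auto
  have "(map_mat Phi E')\<^sup>T = (map_mat Phi E)\<^sup>T * (map_mat Phi P)\<^sup>T"
    unfolding E'_def Phi.mat_hom_mult[OF P E] using E P by (simp add: transpose_mult)
  then have "N = IX_mat k n * (map_mat Phi E)\<^sup>T * (map_mat Phi P)\<^sup>T"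
    unfolding N_def using assoc_mult_mat[OF IX PhiE PhiP] by simp
  then have "det N = det (IX_mat k n * (map_mat Phi E)\<^sup>T) * det ((map_mat Phi P)\<^sup>T)"
    using det_mult[OF mult_carrier_mat[OF IX PhiE] PhiP] by simp
  also have "det ((map_mat Phi P)\<^sup>T) = Phi (det P)"
    using det_transpose[of "map_mat Phi P"] P by simp
  finally show ?thesis unfolding f_E_def by simp
qed

lemma total_degree_f_E_eq_det_N: "total_degree (f_E phi k n E) = total_degree (det N)"
  using total_degree_mult_mp_const[of "phi (det P)" "f_E phi k n E"] f_E_mult_det_P det_P_nonzero
  by simp

lemma N_entry:
  assumes "i < k" "l < k"
  shows "N $$ (i, l) = Phi (E' $$ (l, i)) + (\<Sum>j = 0..<s. mp_var (i * s + j) * Phi (E' $$ (l, k + j)))"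
proof -
  have "map_mat Phi E' \<in> carrier_mat k n" using E'_carrier by simp
  from IX_mat_mult_transpose_entry[OF this assms less_imp_le[OF k_less_n]]
  show ?thesis using assms E'_carrier k_less_n by (simp add: N_def)
qed

lemma total_degree_N_entry_le:
  assumes i: "i < k" and l: "l < k"
  shows "total_degree (N $$ (i, l)) \<le> (if l < r then 1 else 0)"
proof -
  have "total_degree (mp_var (i * s + j) * Phi (E' $$ (l, k + j))) \<le> (if l < r then 1 else 0)"
    if j: "j < s" for j
  proof (cases "l < r")
    case True
    have "total_degree (mp_var (i * s + j) * Phi (E' $$ (l, k + j))) \<le> total_degree (mp_var (i * s + j) :: 'b mpoly)"
      using total_degree_mult_le[of "mp_var (i * s + j)" "Phi (E' $$ (l, k + j))"] by simp
    then show ?thesis using True order_trans[OF _ total_degree_mp_var_le] by simp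
  next
    case False
    then have "E' $$ (l, k + j) = 0"
      using E'_lower_rows_vanish_on_X_block l j by simp
    then show ?thesis by (simp add: mp_const_def)
  qed
  then have sum_le: "total_degree (\<Sum>j = 0..<s. mp_var (i * s + j) * Phi (E' $$ (l, k + j))) \<le>
      (if l < r then 1 else 0)"
    by (intro total_degree_sum_le) simp
  have "total_degree (N $$ (i, l)) \<le>
      total_degree (\<Sum>j = 0..<s. mp_var (i * s + j) * Phi (E' $$ (l, k + j)))"
    unfolding N_entry[OF i l] using total_degree_add_le[of "Phi (E' $$ (l, i))"] by simp
  then show ?thesis using sum_le by (rule order_trans)
qed

lemma total_degree_det_N_le: "total_degree (det N) \<le> r"
  unfolding det_def'[OF N_carrier]
proof (rule total_degree_sum_le)
  fix p assume "p \<in> {p. p permutes {0..<k}}"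
  then have p: "p permutes {0..<k}" by simp
  let ?b = "\<lambda>l. if l < r then 1 else (0::nat)"
  have "total_degree (signof p * (\<Prod>i = 0..<k. N $$ (i, p i))) \<le>
      total_degree (signof p :: 'b mpoly) + total_degree (\<Prod>i = 0..<k. N $$ (i, p i))"
    by (rule total_degree_mult_le)
  also have "\<dots> \<le> (\<Sum>i = 0..<k. total_degree (N $$ (i, p i)))"
    using total_degree_prod_le by simp
  also have "\<dots> \<le> (\<Sum>i = 0..<k. ?b (p i))"
    by (rule sum_mono) (use total_degree_N_entry_le permutes_in_image[OF p] in auto)
  also have "\<dots> = (\<Sum>l = 0..<k. ?b l)"
    using sum.permute[OF p, of ?b] by (simp add: o_def)
  also have "\<dots> = r"
    using r_le_k by (simp add: sum.If_cases Int_absorb1 subset_eq)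
  finally show "total_degree (signof p * (\<Prod>i = 0..<k. N $$ (i, p i))) \<le> r" .
qed

end


context rotated_echelon_form
begin

definition lower_pivots :: "nat set" where
  "lower_pivots = (\<lambda>l. f l - s) ` {r..<k}"

lemma lower_pivots_subset: "lower_pivots \<subseteq> {0..<k}"
  unfolding lower_pivots_def using E'_lower_pivot(1) by auto

lemma card_lower_pivots: "card lower_pivots = k - r"
proof -
  have "inj_on (\<lambda>l. f l - s) {r..<k}"
  proof (rule inj_onI)
    fix x y assume x: "x \<in> {r..<k}" and y: "y \<in> {r..<k}" and eq: "f x - s = f y - s"
    have "s \<le> f x" "s \<le> f y" using pivot_less_s_iff[of x] pivot_less_s_iff[of y] x y by auto
    then show "x = y" using eq pivot_inj x y by auto
  qed
  then show ?thesis unfolding lower_pivots_def by (simp add: card_image)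
qed

definition free_pos :: "nat \<Rightarrow> nat" where
  "free_pos = (SOME g. bij_betw g {0..<r} ({0..<k} - lower_pivots))"

lemma bij_betw_free_pos: "bij_betw free_pos {0..<r} ({0..<k} - lower_pivots)"
proof -
  have "card ({0..<k} - lower_pivots) = r"
    using card_Diff_subset[OF finite_subset[OF lower_pivots_subset] lower_pivots_subset]
      card_lower_pivots r_le_k by simp
  then have "\<exists>g. bij_betw g {0..<r} ({0..<k} - lower_pivots)"
    using ex_bij_betw_nat_finite[of "{0..<k} - lower_pivots"] by auto
  then show ?thesis unfolding free_pos_def by (rule someI_ex)
qed

lemma free_pos_less: "l < r \<Longrightarrow> free_pos l < k"
  and free_pos_notin_lower_pivots: "l < r \<Longrightarrow> free_pos l \<notin> lower_pivots"
  using bij_betw_apply[OF bij_betw_free_pos, of l] by auto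

lemma free_pos_inj: "l < r \<Longrightarrow> l' < r \<Longrightarrow> free_pos l = free_pos l' \<Longrightarrow> l = l'"
  using bij_betw_imp_inj_on[OF bij_betw_free_pos] by (auto dest: inj_onD)

definition pivot_row :: "nat \<Rightarrow> nat" where
  "pivot_row j = (THE l. l < r \<and> f l = j)"

lemma pivot_row_pivot: assumes "l < r" shows "pivot_row (f l) = l"
  unfolding pivot_row_def
proof (rule the_equality)
  fix l' assume "l' < r \<and> f l' = f l"
  then show "l' = l" using pivot_inj[of l' l] assms r_le_k by auto
qed (use assms in simp)

definition C :: "'a mat" where
  "C = mat k k (\<lambda>(i, l). if l < r then (if i = free_pos l then 1 else 0) else E' $$ (l, i))"

lemma C_carrier: "C \<in> carrier_mat k k"
  by (simp add: C_def)

lemma C_lower_pivot_row: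
  assumes u: "r \<le> u" "u < k" and l: "l < k"
  shows "C $$ (f u - s, l) = (if l = u then 1 else 0)"
proof (cases "l < r")
  case True
  have "f u - s \<in> lower_pivots" using u unfolding lower_pivots_def by auto
  then have "free_pos l \<noteq> f u - s" using free_pos_notin_lower_pivots[OF True] by auto
  then show ?thesis using True u E'_lower_pivot(1)[OF u u(2)] by (auto simp: C_def)
next
  case False
  then show ?thesis using E'_lower_pivot[OF u l] l by (auto simp: C_def)
qed

lemma C_free_pos_row:
  assumes "l0 < r" "l < r"
  shows "C $$ (free_pos l0, l) = (if l = l0 then 1 else 0)"
  using assms free_pos_inj[OF assms(1,2)] free_pos_less[OF assms(1)] r_le_k by (auto simp: C_def)

lemma det_C_nonzero: "det C \<noteq> 0"
proof
  assume "det C = 0"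
  then obtain v where v: "v \<in> carrier_vec k" "v \<noteq> 0\<^sub>v k" "C *\<^sub>v v = 0\<^sub>v k"
    using det_0_iff_vec_prod_zero[OF C_carrier] by blast
  have kernel: "(\<Sum>l = 0..<k. C $$ (a, l) * v $ l) = 0" if a: "a < k" for a
  proof -
    have "(C *\<^sub>v v) $ a = (\<Sum>l = 0..<k. C $$ (a, l) * v $ l)"
      using a v(1) C_carrier by (auto simp: scalar_prod_def intro!: sum.cong)
    then show ?thesis using v(3) a by simp
  qed
  have v_lower: "v $ u = 0" if u: "r \<le> u" "u < k" for u
  proof -
    have "(\<Sum>l = 0..<k. C $$ (f u - s, l) * v $ l) = (\<Sum>l = 0..<k. if l = u then v $ l else 0)"
      using C_lower_pivot_row[OF u] by (intro sum.cong) auto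
    then show ?thesis using kernel[OF E'_lower_pivot(1)[OF u u(2)]] u by simp
  qed
  have v_upper: "v $ l0 = 0" if l0: "l0 < r" for l0
  proof -
    have "C $$ (free_pos l0, l) * v $ l = (if l = l0 then v $ l else 0)" if "l < k" for l
      using C_free_pos_row[OF l0, of l] v_lower[of l] that by (cases "l < r") auto
    then have "(\<Sum>l = 0..<k. C $$ (free_pos l0, l) * v $ l) = (\<Sum>l = 0..<k. if l = l0 then v $ l else 0)"
      by (intro sum.cong) auto
    then show ?thesis using kernel[OF free_pos_less[OF l0]] l0 r_le_k by simp
  qed
  have "v = 0\<^sub>v k"
    using v(1) v_lower v_upper by (intro eq_vecI) (auto, meson not_less)
  then show False using v(2) by simp
qed

end


context rotated_echelon_form_hom
begin

text \<open>
  The variable in row i and column j of X is sent to t [i = free_pos l] - E'_{l,i} if j = f l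
  is the pivot column of a row l < r, and to 0 otherwise. This cancels column l < r of
  N = [I_k | X] E'^T except for the entry t in row free_pos l, and leaves the constant columns l \<ge> r alone.
\<close>

definition subst_var :: "nat \<Rightarrow> nat \<Rightarrow> 'b poly" where
  "subst_var i j = (if \<exists>l<r. f l = j
     then [: - phi (E' $$ (pivot_row j, i)), if i = free_pos (pivot_row j) then 1 else 0 :] else 0)"

abbreviation specialise :: "'b mpoly \<Rightarrow> 'b poly" where
  "specialise \<equiv> mpoly_subst (\<lambda>v. subst_var (v div s) (v mod s))"

lemma degree_subst_var_le: "degree (subst_var i j) \<le> 1"
  by (simp add: subst_var_def)

lemma specialise_N_entry:
  assumes i: "i < k" and l: "l < k"
  shows "specialise (N $$ (i, l)) =
    (if l < r then (if i = free_pos l then [:0, 1:] else 0) else [: phi (E' $$ (l, i)) :])"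
proof -
  let ?c = "\<lambda>j. [: phi (E' $$ (l, k + j)) :]"
  have spec: "specialise (N $$ (i, l)) = [: phi (E' $$ (l, i)) :] + (\<Sum>j = 0..<s. subst_var i j * ?c j)"
    unfolding N_entry[OF i l] by (simp add: mpoly_subst_add mpoly_subst_mult mpoly_subst_sum)
  show ?thesis
  proof (cases "l < r")
    case False
    then have "?c j = 0" if "j < s" for j
      using E'_lower_rows_vanish_on_X_block l that by simp
    then show ?thesis using spec False by simp
  next
    case True
    have summand: "subst_var i j * ?c j = (if j = f l then subst_var i (f l) else 0)" if j: "j < s" for j
    proof -
      have c: "?c j = [: phi (R $$ (l, j)) :]" using E'_X_block[OF l j] by simp
      consider "j = f l" | l' where "l' < r" "f l' = j" "l' \<noteq> l" | "\<nexists>l'. l' < r \<and> f l' = j"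
        by blast
      then show ?thesis
      proof cases
        case 1
        then show ?thesis using c R_pivot_col[OF l l] by (simp add: pCons_one)
      next
        case 2
        then show ?thesis using c R_pivot_col[OF l, of l'] pivot_inj[of l' l] l r_le_k by auto
      qed (auto simp: subst_var_def)
    qed
    have "(\<Sum>j = 0..<s. subst_var i j * ?c j) = (\<Sum>j = 0..<s. if j = f l then subst_var i (f l) else 0)"
      by (rule sum.cong[OF refl]) (rule summand, simp)
    also have "\<dots> = subst_var i (f l)"
      using pivot_less_s_iff[OF l] True by simp
    finally have "(\<Sum>j = 0..<s. subst_var i j * ?c j) = subst_var i (f l)" .
    then show ?thesis
      using spec True pivot_row_pivot[OF True] by (auto simp: subst_var_def)
  qed
qed

definition D :: "'b poly mat" where
  "D = mat k k (\<lambda>(i, j). if i = j then (if i < r then [:0, 1:] else 1) else 0)"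

lemma D_carrier: "D \<in> carrier_mat k k"
  by (simp add: D_def)

lemma det_D: "det D = [:0, 1:] ^ r"
proof -
  have "det D = prod_list (diag_mat D)"
    using D_carrier by (intro det_upper_triangular) (auto simp: upper_triangular_def D_def)
  also have "\<dots> = (\<Prod>i = 0..<k. if i < r then [:0, 1:] else 1)"
    by (simp add: diag_mat_def D_def prod.list_conv_set_nth atLeast0LessThan)
  also have "\<dots> = [:0, 1:] ^ r"
    using r_le_k by (simp add: prod.If_cases Int_absorb1 subset_eq)
  finally show ?thesis .
qed

abbreviation const_poly :: "'a \<Rightarrow> 'b poly" where "const_poly a \<equiv> [: phi a :]"

lemma comm_ring_hom_const_poly: "comm_ring_hom const_poly"
  by unfold_locales (simp_all add: phi.hom_add phi.hom_mult mult_to_poly pCons_one)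

lemma specialise_N: "map_mat specialise N = map_mat const_poly C * D"
proof (rule eq_matI)
  fix i l assume "i < dim_row (map_mat const_poly C * D)" "l < dim_col (map_mat const_poly C * D)"
  then have i: "i < k" and l: "l < k" using C_carrier D_carrier by auto
  have "(map_mat const_poly C * D) $$ (i, l) = (\<Sum>j = 0..<k. const_poly (C $$ (i, j)) * D $$ (j, l))"
    using i l C_carrier D_carrier by (simp add: scalar_prod_def)
  also have "\<dots> = (\<Sum>j = 0..<k. if j = l then const_poly (C $$ (i, l)) * D $$ (l, l) else 0)"
    using l by (intro sum.cong) (auto simp: D_def)
  also have "\<dots> = const_poly (C $$ (i, l)) * D $$ (l, l)"
    using l by simp
  also have "\<dots> = specialise (N $$ (i, l))"
    using specialise_N_entry[OF i l] i l by (auto simp: C_def D_def pCons_one)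
  finally show "map_mat specialise N $$ (i, l) = (map_mat const_poly C * D) $$ (i, l)"
    using i l N_carrier by simp
qed (use N_carrier C_carrier D_carrier in auto)

lemma total_degree_det_N_ge: "r \<le> total_degree (det N)"
proof -
  interpret specialise: comm_ring_hom specialise by (rule comm_ring_hom_mpoly_subst)
  interpret const_poly: comm_ring_hom const_poly by (rule comm_ring_hom_const_poly)
  have "specialise (det N) = det (map_mat specialise N)"
    by simp
  also have "\<dots> = det (map_mat const_poly C * D)"
    unfolding specialise_N ..
  also have "\<dots> = [: phi (det C) :] * [:0, 1:] ^ r"
    using det_mult[OF _ D_carrier, of "map_mat const_poly C"] C_carrier det_D by simp
  finally have "degree (specialise (det N)) = r"
    using det_C_nonzero by (simp add: degree_mult_eq degree_linear_power)
  moreover have "degree (specialise (det N)) \<le> total_degree (det N)"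
    by (rule degree_mpoly_subst_le[OF degree_subst_var_le])
  ultimately show ?thesis by simp
qed

lemma total_degree_f_E: "total_degree (f_E phi k n E) = r"
  using total_degree_f_E_eq_det_N total_degree_det_N_le total_degree_det_N_ge by simp

end

theorem lemma4p5:
  fixes phi :: "'a::{finite,field} \<Rightarrow> 'b::{finite,field}"
    and q m k n :: nat and E :: "'a mat"
  assumes "card (UNIV :: 'a set) = q" and "\<exists>p r. prime p \<and> r \<ge> 1 \<and> q = p ^ r"
    and "m \<ge> 1" and "card (UNIV :: 'b set) = q ^ m"
    and "phi 0 = 0" and "phi 1 = 1"
    and "\<And>x y. phi (x + y) = phi x + phi y" and "\<And>x y. phi (x * y) = phi x * phi y"
    and "1 \<le> k" and "k < n"
    and "E \<in> T_set k n"
  shows "total_degree (f_E phi k n E) = k - subspace_dim n (vec_space.row_space n E \<inter> U0 k n)"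
proof -
  have E: "E \<in> carrier_mat k n" and rank: "vec_space.rank k E = k"
    using assms(11) unfolding T_set_def by auto
  define R where "R = gauss_jordan_single (rotate_cols k E)"
  note gauss_jordan = gauss_jordan_single[OF rotate_cols_carrier[OF E] R_def[symmetric]]
  obtain P Q where PQ: "R = P * rotate_cols k E" "P \<in> carrier_mat k k" "Q \<in> carrier_mat k k"
    "P * Q = 1\<^sub>m k" "Q * P = 1\<^sub>m k" using gauss_jordan(4) by blast
  obtain f where f: "pivot_fun R f n"
    using gauss_jordan(2,3) unfolding row_echelon_form_def by auto
  have "rotated_echelon_form E k n P Q R f"
    by unfold_locales (use E assms(10) PQ f rank in auto)
  moreover have "field_hom phi"
    by unfold_locales (use assms(5-8) in auto)
  ultimately interpret rotated_echelon_form_hom E k n P Q R f phi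
    by (rule rotated_echelon_form_hom.intro)
  show ?thesis using total_degree_f_E subspace_dim_row_space_Int_U0 r_le_k by simp
qed

end
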